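(* Let $N\ge 1$ and consider subsystems $\Sigma_1,\dots,\Sigma_N$, their interconnection $\Sigma$, safe sets $X=\prod_{i=1}^N X_i$ and input sets $U=\prod_{i=1}^N U_i$, all as described in the context. For each $i\in[1;N]$ let $C_i:\mathbb{R}^{n_i}\rightrightarrows U_i$ be a safety controller for subsystem $\Sigma_i$ and safe set $X_i$. Define $C:\mathbb{R}^n\rightrightarrows U$ by $C(x)=\emptyset$ for $x\in\mathbb{R}^n\setminus X$ and, for $x=[x_1;\dots;x_N]\in X$ (i.e. $x_i\in X_i$ for all $i$), $$C(x)=\{u=[u_1;\dots;u_N]\in U \mid u_i\in C_i(x_i)\ \text{for all } i\in[1;N]\}.$$ Then $C$ is a safety controller for the interconnected system $\Sigma$ and safe set $X$.
   Context: Subsystem $\Sigma_i$ ($i\in[1;N]$) has state space $\mathbb{R}^{n_i}$, external input space $\mathbb{R}^{m_i}$, internal input $z_i=[z_{i1};\dots;z_{i(i-1)};z_{i(i+1)};\dots;z_{iN}]\in\mathbb{R}^{p_i}$ with $z_{ij}\in\mathbb{R}^{p_{ij}}$, a disturbance set $W_i\subseteq\mathbb{R}^{n_i}$, a state transition function $f_i:\mathbb{R}^{n_i}\times\mathbb{R}^{m_i}\times\mathbb{R}^{p_i}\times W_i\to\mathbb{R}^{n_i}$ (so $x_i(t+1)=f_i(x_i(t),u_i(t),z_i(t),w_i(t))$), and output maps $h_{ij}:\mathbb{R}^{n_i}\to\mathbb{R}^{q_{ij}}$, $j\in[1;N]$, where $q_{ji}=p_{ij}$ for $i\ne j$. The interconnected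 system $\Sigma$ has state space $\mathbb{R}^n$, $n=\sum_i n_i$, input space $\mathbb{R}^m$, $m=\sum_i m_i$, disturbance set $W=\prod_{i=1}^N W_i$, and transition function $f(x,u,w)=[f_1(x_1,u_1,z_1,w_1);\dots;f_N(x_N,u_N,z_N,w_N)]$ for $x=[x_1;\dots;x_N]$, $u=[u_1;\dots;u_N]$, $w=[w_1;\dots;w_N]$, where the interconnection variables are $z_{ij}=h_{ji}(x_j)$ for $i\neq j$. The sets $X_i\subseteq\mathbb{R}^{n_i}$ are compact safe sets and $U_i\subseteq\mathbb{R}^{m_i}$ admissible input sets. For $i\ne j$, sets $Z_{ij}\subseteq\mathbb{R}^{p_{ij}}$ are given with $h_{ji}(X_j)\subseteq Z_{ij}$, and $Z_i=\prod_{j\ne i}Z_{ij}$. A safety controller for $\Sigma$ and safe set $X$ is a set-valued map $C:\mathbb{R}^n\rightrightarrows U$ such that (1) $C(x)\subseteq U$ for all $x\in\mathbb{R}^n$; (2) $\mathrm{dom}(C)=\{x\in\mathbb{R}^n\mid C(x)\ne\emptyset\}\subseteq X$; (3) for all $x\in\mathrm{dom}(C)$, $u\in C(x)$, $w\in W$: $f(x,u,w)\in\mathrm{dom}(C)$. A safety controller for subsystem $\Sigma_i$ and safe set $X_i$ is a set-valued map $C_i:\mathbb{R}^{n_i}\rightrightarrows U_i$ with (1) $C_i(x_i)\subseteq U_i$ for all $x_i$; (2) $\mathrm{dom}(C_i)\subseteq X_i$; (3) for all $x_i\in\mathrm{dom}(C_i)$, $u_i\in C_i(x_i)$, $w_i\in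 W_i$, $z_i\in Z_i$: $f_i(x_i,u_i,z_i,w_i)\in\mathrm{dom}(C_i)$. *)

theory Defs
  imports "HOL-Analysis.Analysis"
begin

text \<open>Euclidean space R^k, rendered as real sequences supported on the first k
  coordinates (indices 0..k-1). With the product topology on nat => real this
  is homeomorphic to R^k, so compactness has its usual meaning.\<close>
definition rvec :: "nat \<Rightarrow> (nat \<Rightarrow> real) set" where
  "rvec k = {v. \<forall>j\<ge>k. v j = 0}"

type_synonym vec = "nat \<Rightarrow> real"

definition sub_safety_controller ::
  "nat \<Rightarrow> vec set \<Rightarrow> vec set \<Rightarrow> (nat \<Rightarrow> vec) set \<Rightarrow> vec set
   \<Rightarrow> (vec \<Rightarrow> vec \<Rightarrow> (nat \<Rightarrow> vec) \<Rightarrow> vec \<Rightarrow> vec) \<Rightarrow> (vec \<Rightarrow> vec set) \<Rightarrow> bool" where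
  "sub_safety_controller ni Ui Xi Zi Wi fi Ci \<longleftrightarrow>
     (\<forall>x\<in>rvec ni. Ci x \<subseteq> Ui) \<and>
     {x\<in>rvec ni. Ci x \<noteq> {}} \<subseteq> Xi \<and>
     (\<forall>x\<in>{x\<in>rvec ni. Ci x \<noteq> {}}. \<forall>u\<in>Ci x. \<forall>w\<in>Wi. \<forall>z\<in>Zi.
        fi x u z w \<in> {x\<in>rvec ni. Ci x \<noteq> {}})"

definition safety_controller ::
  "'x set \<Rightarrow> 'u set \<Rightarrow> 'x set \<Rightarrow> 'w set \<Rightarrow> ('x \<Rightarrow> 'u \<Rightarrow> 'w \<Rightarrow> 'x) \<Rightarrow> ('x \<Rightarrow> 'u set) \<Rightarrow> bool" where
  "safety_controller S U X W f C \<longleftrightarrow>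
     (\<forall>x\<in>S. C x \<subseteq> U) \<and>
     {x\<in>S. C x \<noteq> {}} \<subseteq> X \<and>
     (\<forall>x\<in>{x\<in>S. C x \<noteq> {}}. \<forall>u\<in>C x. \<forall>w\<in>W. f x u w \<in> {x\<in>S. C x \<noteq> {}})"

definition interconn :: "nat \<Rightarrow> (nat \<Rightarrow> nat \<Rightarrow> vec \<Rightarrow> vec) \<Rightarrow> (nat \<Rightarrow> vec) \<Rightarrow> nat \<Rightarrow> (nat \<Rightarrow> vec)" where
  "interconn N h x i = (\<lambda>j\<in>{1..N} - {i}. h j i (x j))"

text \<open>Transition function of the interconnected system, on stacked states
  x = [x_1; ...; x_N] represented as families indexed by {1..N}.\<close>
definition interconnected_f ::
  "nat \<Rightarrow> (nat \<Rightarrow> vec \<Rightarrow> vec \<Rightarrow> (nat \<Rightarrow> vec) \<Rightarrow> vec \<Rightarrow> vec) \<Rightarrow> (nat \<Rightarrow> nat \<Rightarrow> vec \<Rightarrow> vec)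
   \<Rightarrow> (nat \<Rightarrow> vec) \<Rightarrow> (nat \<Rightarrow> vec) \<Rightarrow> (nat \<Rightarrow> vec) \<Rightarrow> (nat \<Rightarrow> vec)" where
  "interconnected_f N f h x u w = (\<lambda>i\<in>{1..N}. f i (x i) (u i) (interconn N h x i) (w i))"

end

theory Submission
  imports Defs
begin

text \<open>The domain of the product controller is the product of the domains of the subsystem
  controllers. Whenever every subsystem is in the domain of its controller, the states of all
  neighbours lie in their safe sets, so every interconnection variable lies in the set of internal
  inputs the subsystem controller was designed to tolerate; hence each subsystem steps back into
  its controller's domain, and so does the whole state.\<close>

lemma sub_safety_controllerD:
  assumes "sub_safety_controller ni Ui Xi Zi Wi fi Ci"
  shows sub_safety_controller_input: "x \<in> rvec ni \<Longrightarrow> Ci x \<subseteq> Ui"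
    and sub_safety_controller_safe: "x \<in> rvec ni \<Longrightarrow> Ci x \<noteq> {} \<Longrightarrow> x \<in> Xi"
    and sub_safety_controller_invariant:
      "x \<in> rvec ni \<Longrightarrow> Ci x \<noteq> {} \<Longrightarrow> u \<in> Ci x \<Longrightarrow> w \<in> Wi \<Longrightarrow> z \<in> Zi \<Longrightarrow>
        fi x u z w \<in> {v \<in> rvec ni. Ci v \<noteq> {}}"
  using assms unfolding sub_safety_controller_def by blast+

definition product_controller ::
  "'i set \<Rightarrow> ('i \<Rightarrow> vec set) \<Rightarrow> ('i \<Rightarrow> vec set) \<Rightarrow> ('i \<Rightarrow> vec \<Rightarrow> vec set) \<Rightarrow> ('i \<Rightarrow> vec) \<Rightarrow> ('i \<Rightarrow> vec) set"
  where "product_controller I X U Cs =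
    (\<lambda>x. if x \<in> (\<Pi>\<^sub>E i\<in>I. X i) then {u \<in> (\<Pi>\<^sub>E i\<in>I. U i). \<forall>i\<in>I. u i \<in> Cs i (x i)} else {})"

locale sub_safety_controller_family =
  fixes I :: "'i set"
    and n :: "'i \<Rightarrow> nat"
    and U X W :: "'i \<Rightarrow> vec set"
    and Zs :: "'i \<Rightarrow> (nat \<Rightarrow> vec) set"
    and f :: "'i \<Rightarrow> vec \<Rightarrow> vec \<Rightarrow> (nat \<Rightarrow> vec) \<Rightarrow> vec \<Rightarrow> vec"
    and Cs :: "'i \<Rightarrow> vec \<Rightarrow> vec set"
  assumes sub_ctrl: "i \<in> I \<Longrightarrow> sub_safety_controller (n i) (U i) (X i) (Zs i) (W i) (f i) (Cs i)"
begin

lemma product_controller_eq_PiE: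
  assumes x: "x \<in> (\<Pi>\<^sub>E i\<in>I. X i)" "x \<in> (\<Pi>\<^sub>E i\<in>I. rvec (n i))"
  shows "product_controller I X U Cs x = (\<Pi>\<^sub>E i\<in>I. Cs i (x i))"
proof -
  have "(\<Pi>\<^sub>E i\<in>I. Cs i (x i)) \<subseteq> (\<Pi>\<^sub>E i\<in>I. U i)"
    using sub_safety_controller_input[OF sub_ctrl] x(2) by (intro PiE_mono) blast
  with x(1) show ?thesis
    unfolding product_controller_def by (auto simp: PiE_iff extensional_def)
qed

lemma product_controller_domain:
  "{x \<in> (\<Pi>\<^sub>E i\<in>I. rvec (n i)). product_controller I X U Cs x \<noteq> {}}
    = (\<Pi>\<^sub>E i\<in>I. {v \<in> rvec (n i). Cs i v \<noteq> {}})" (is "?dom = ?prod")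
proof (intro equalityI subsetI)
  fix x assume "x \<in> ?dom"
  then have x: "x \<in> (\<Pi>\<^sub>E i\<in>I. X i)" "x \<in> (\<Pi>\<^sub>E i\<in>I. rvec (n i))"
    and "product_controller I X U Cs x \<noteq> {}"
    by (auto simp: product_controller_def split: if_splits)
  then have "(\<Pi>\<^sub>E i\<in>I. Cs i (x i)) \<noteq> {}"
    using product_controller_eq_PiE[OF x] by simp
  with x(2) show "x \<in> ?prod"
    by (auto simp: PiE_eq_empty_iff)
next
  fix x assume x_dom: "x \<in> ?prod"
  then have x: "x \<in> (\<Pi>\<^sub>E i\<in>I. X i)" "x \<in> (\<Pi>\<^sub>E i\<in>I. rvec (n i))"
    using sub_safety_controller_safe[OF sub_ctrl] by (auto simp: PiE_iff)
  moreover have "(\<Pi>\<^sub>E i\<in>I. Cs i (x i)) \<noteq> {}"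
    using x_dom by (auto simp: PiE_eq_empty_iff)
  ultimately show "x \<in> ?dom"
    using product_controller_eq_PiE[OF x] by simp
qed

theorem safety_controller_product_controller:
  assumes z_safe: "\<And>x i. x \<in> (\<Pi>\<^sub>E i\<in>I. X i) \<Longrightarrow> i \<in> I \<Longrightarrow> z x i \<in> Zs i"
  shows "safety_controller (\<Pi>\<^sub>E i\<in>I. rvec (n i)) (\<Pi>\<^sub>E i\<in>I. U i) (\<Pi>\<^sub>E i\<in>I. X i) (\<Pi>\<^sub>E i\<in>I. W i)
    (\<lambda>x u w. \<lambda>i\<in>I. f i (x i) (u i) (z x i) (w i)) (product_controller I X U Cs)"
  unfolding safety_controller_def product_controller_domain
proof (intro conjI)
  show "\<forall>x\<in>(\<Pi>\<^sub>E i\<in>I. rvec (n i)). product_controller I X U Cs x \<subseteq> (\<Pi>\<^sub>E i\<in>I. U i)"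
    by (simp add: product_controller_def)
  show "(\<Pi>\<^sub>E i\<in>I. {v \<in> rvec (n i). Cs i v \<noteq> {}}) \<subseteq> (\<Pi>\<^sub>E i\<in>I. X i)"
    using sub_safety_controller_safe[OF sub_ctrl] by (auto simp: PiE_iff)
  show "\<forall>x\<in>(\<Pi>\<^sub>E i\<in>I. {v \<in> rvec (n i). Cs i v \<noteq> {}}). \<forall>u\<in>product_controller I X U Cs x.
      \<forall>w\<in>(\<Pi>\<^sub>E i\<in>I. W i). (\<lambda>i\<in>I. f i (x i) (u i) (z x i) (w i)) \<in> (\<Pi>\<^sub>E i\<in>I. {v \<in> rvec (n i). Cs i v \<noteq> {}})"
  proof (intro ballI)
    fix x u w
    assume x: "x \<in> (\<Pi>\<^sub>E i\<in>I. {v \<in> rvec (n i). Cs i v \<noteq> {}})"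
      and u: "u \<in> product_controller I X U Cs x" and w: "w \<in> (\<Pi>\<^sub>E i\<in>I. W i)"
    have x_safe: "x \<in> (\<Pi>\<^sub>E i\<in>I. X i)"
      using u by (auto simp: product_controller_def split: if_splits)
    have "f i (x i) (u i) (z x i) (w i) \<in> {v \<in> rvec (n i). Cs i v \<noteq> {}}" if i: "i \<in> I" for i
    proof (rule sub_safety_controller_invariant[OF sub_ctrl[OF i]])
      show "x i \<in> rvec (n i)" "Cs i (x i) \<noteq> {}"
        using x i by auto
      show "u i \<in> Cs i (x i)"
        using u x_safe i by (auto simp: product_controller_def)
      show "w i \<in> W i"
        using w i by auto
      show "z x i \<in> Zs i"
        using z_safe[OF x_safe i] .
    qed
    then show "(\<lambda>i\<in>I. f i (x i) (u i) (z x i) (w i)) \<in> (\<Pi>\<^sub>E i\<in>I. {v \<in> rvec (n i). Cs i v \<noteq> {}})"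
      by simp
  qed
qed

end

lemma interconn_mem_PiE:
  assumes "x \<in> (\<Pi>\<^sub>E j\<in>{1..N}. X j)"
    and "\<And>j. j \<in> {1..N} - {i} \<Longrightarrow> h j i ` X j \<subseteq> Z i j"
  shows "interconn N h x i \<in> (\<Pi>\<^sub>E j\<in>{1..N} - {i}. Z i j)"
  using assms unfolding interconn_def restrict_PiE_iff by blast

theorem theorem1:
  fixes N :: nat
    and n m :: "nat \<Rightarrow> nat"
    and p :: "nat \<Rightarrow> nat \<Rightarrow> nat"
    and f :: "nat \<Rightarrow> vec \<Rightarrow> vec \<Rightarrow> (nat \<Rightarrow> vec) \<Rightarrow> vec \<Rightarrow> vec"
    and h :: "nat \<Rightarrow> nat \<Rightarrow> vec \<Rightarrow> vec"
    and W X U :: "nat \<Rightarrow> vec set"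
    and Z :: "nat \<Rightarrow> nat \<Rightarrow> vec set"
    and Cs :: "nat \<Rightarrow> vec \<Rightarrow> vec set"
  assumes N: "N \<ge> 1"
    and W_sub: "\<And>i. i \<in> {1..N} \<Longrightarrow> W i \<subseteq> rvec (n i)"
    and f_maps: "\<And>i x u z w. i \<in> {1..N} \<Longrightarrow> x \<in> rvec (n i) \<Longrightarrow> u \<in> rvec (m i) \<Longrightarrow>
        z \<in> (\<Pi>\<^sub>E j\<in>{1..N} - {i}. rvec (p i j)) \<Longrightarrow> w \<in> W i \<Longrightarrow> f i x u z w \<in> rvec (n i)"
    and h_maps: "\<And>i j x. i \<in> {1..N} \<Longrightarrow> j \<in> {1..N} \<Longrightarrow> i \<noteq> j \<Longrightarrow> x \<in> rvec (n j) \<Longrightarrow>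
        h j i x \<in> rvec (p i j)"
    and X_sub: "\<And>i. i \<in> {1..N} \<Longrightarrow> X i \<subseteq> rvec (n i)"
    and X_compact: "\<And>i. i \<in> {1..N} \<Longrightarrow> compact (X i)"
    and U_sub: "\<And>i. i \<in> {1..N} \<Longrightarrow> U i \<subseteq> rvec (m i)"
    and Z_sub: "\<And>i j. i \<in> {1..N} \<Longrightarrow> j \<in> {1..N} \<Longrightarrow> i \<noteq> j \<Longrightarrow> Z i j \<subseteq> rvec (p i j)"
    and hX_Z: "\<And>i j. i \<in> {1..N} \<Longrightarrow> j \<in> {1..N} \<Longrightarrow> i \<noteq> j \<Longrightarrow> h j i ` X j \<subseteq> Z i j"
    and Cs_ctrl: "\<And>i. i \<in> {1..N} \<Longrightarrow>
        sub_safety_controller (n i) (U i) (X i) (\<Pi>\<^sub>E j\<in>{1..N} - {i}. Z i j) (W i) (f i) (Cs i)"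
  shows "safety_controller
           (\<Pi>\<^sub>E i\<in>{1..N}. rvec (n i))
           (\<Pi>\<^sub>E i\<in>{1..N}. U i)
           (\<Pi>\<^sub>E i\<in>{1..N}. X i)
           (\<Pi>\<^sub>E i\<in>{1..N}. W i)
           (interconnected_f N f h)
           (\<lambda>x. if x \<in> (\<Pi>\<^sub>E i\<in>{1..N}. X i)
                 then {u \<in> (\<Pi>\<^sub>E i\<in>{1..N}. U i). \<forall>i\<in>{1..N}. u i \<in> Cs i (x i)}
                 else {})"
proof -
  interpret sub_safety_controller_family "{1..N}" n U X W "\<lambda>i. \<Pi>\<^sub>E j\<in>{1..N} - {i}. Z i j" f Cs
    by unfold_locales (rule Cs_ctrl)
  have dynamics: "interconnected_f N f h = (\<lambda>x u w. \<lambda>i\<in>{1..N}. f i (x i) (u i) (interconn N h x i) (w i))"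
    by (intro ext) (simp add: interconnected_f_def)
  have "interconn N h x i \<in> (\<Pi>\<^sub>E j\<in>{1..N} - {i}. Z i j)"
    if "x \<in> (\<Pi>\<^sub>E j\<in>{1..N}. X j)" and "i \<in> {1..N}" for x i
    using that(1) by (rule interconn_mem_PiE) (use hX_Z that(2) in auto)
  from safety_controller_product_controller[OF this] show ?thesis
    unfolding dynamics product_controller_def .
qed

end
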